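(* Let $M=\langle W,\leq,R,V\rangle$ be a brIML1-model, let $\gamma$ be a formula such that $w\nVdash\gamma$ for some $w\in W$, let $\Sigma$ be the set of all subformulas of $\gamma$, and let $M_\Sigma=\langle W_\Sigma,\leq_\Sigma,R_\Sigma,V_\Sigma\rangle$ be the filtered model. Then for every $w\in W$ and every $\alpha\in\Sigma$: $w\Vdash_M\alpha$ iff $[w]\Vdash_{M_\Sigma}\alpha$.
   Context: Formulas are built from a denumerable set $PV$ of propositional variables and $\bot$ using $\land,\lor,\rightarrow$ and unary $\Delta$. A brIML1-model $\langle W,\leq,R,V\rangle$: $W$ non-empty, $\leq$ a partial order, $R$ a binary relation with ($w\leq v\Rightarrow wRv$) and ($w\leq v$, $vRu$ $\Rightarrow wRu$), $V:PV\to P(W)$ upward closed under $\leq$. Forcing: atoms via $V$; $\bot$ never; $\land,\lor$ pointwise; $w\Vdash\varphi\rightarrow\psi$ iff every $v\geq w$ has $v\nVdash\varphi$ or $v\Vdash\psi$; $w\Vdash\Delta\varphi$ iff every $v$ with $wRv$ has $v\Vdash\varphi$. Filtration: $w\sim v$ iff $w,v$ force the same formulas of $\Sigma$; $[w]$ the class of $w$; $W_\Sigma=\{[w]:w\in W\}$; $[w]\leq_\Sigma[v]$ iff every $\alpha\in\Sigma$ forced at $w$ is forced at $v$; $[w]R_\Sigma[v]$ iff for every $\Delta\beta\in\Sigma$, $w\Vdash\Delta\beta$ implies $v\Vdash\beta$; $V_\Sigma(q)=\{[w]:w\in V(q)\}$ if $q\in\Sigma$ and $V_\Sigma(q)=\emptyset$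 if $q\notin\Sigma$. Forcing in $M_\Sigma$ is bi-relational forcing with respect to $\leq_\Sigma,R_\Sigma,V_\Sigma$. *)

theory Defs
  imports Main
begin

datatype fm = Var nat | Bot | And fm fm | Or fm fm | Imp fm fm | Delta fm

primrec subformulas :: "fm \<Rightarrow> fm set" where
  "subformulas (Var p) = {Var p}"
| "subformulas Bot = {Bot}"
| "subformulas (And a b) = insert (And a b) (subformulas a \<union> subformulas b)"
| "subformulas (Or a b) = insert (Or a b) (subformulas a \<union> subformulas b)"
| "subformulas (Imp a b) = insert (Imp a b) (subformulas a \<union> subformulas b)"
| "subformulas (Delta a) = insert (Delta a) (subformulas a)"

definition brIML1_model ::
  "'w set \<Rightarrow> ('w \<Rightarrow> 'w \<Rightarrow> bool) \<Rightarrow> ('w \<Rightarrow> 'w \<Rightarrow> bool) \<Rightarrow> (nat \<Rightarrow> 'w set) \<Rightarrow> bool" where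
  "brIML1_model W le R V \<longleftrightarrow>
     W \<noteq> {} \<and>
     (\<forall>w\<in>W. le w w) \<and>
     (\<forall>w\<in>W. \<forall>v\<in>W. le w v \<and> le v w \<longrightarrow> w = v) \<and>
     (\<forall>w\<in>W. \<forall>v\<in>W. \<forall>u\<in>W. le w v \<and> le v u \<longrightarrow> le w u) \<and>
     (\<forall>w v. le w v \<longrightarrow> w \<in> W \<and> v \<in> W) \<and>
     (\<forall>w v. R w v \<longrightarrow> w \<in> W \<and> v \<in> W) \<and>
     (\<forall>w\<in>W. \<forall>v\<in>W. le w v \<longrightarrow> R w v) \<and>
     (\<forall>w\<in>W. \<forall>v\<in>W. \<forall>u\<in>W. le w v \<and> R v u \<longrightarrow> R w u) \<and>
     (\<forall>q. V q \<subseteq> W) \<and>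
     (\<forall>q. \<forall>w\<in>W. \<forall>v\<in>W. w \<in> V q \<and> le w v \<longrightarrow> v \<in> V q)"

fun forces ::
  "'w set \<Rightarrow> ('w \<Rightarrow> 'w \<Rightarrow> bool) \<Rightarrow> ('w \<Rightarrow> 'w \<Rightarrow> bool) \<Rightarrow> (nat \<Rightarrow> 'w set) \<Rightarrow> 'w \<Rightarrow> fm \<Rightarrow> bool" where
  "forces W le R V w (Var q) \<longleftrightarrow> w \<in> V q"
| "forces W le R V w Bot \<longleftrightarrow> False"
| "forces W le R V w (And a b) \<longleftrightarrow> forces W le R V w a \<and> forces W le R V w b"
| "forces W le R V w (Or a b) \<longleftrightarrow> forces W le R V w a \<or> forces W le R V w b"
| "forces W le R V w (Imp a b) \<longleftrightarrow>
     (\<forall>v\<in>W. le w v \<longrightarrow> \<not> forces W le R V v a \<or> forces W le R V v b)"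
| "forces W le R V w (Delta a) \<longleftrightarrow> (\<forall>v\<in>W. R w v \<longrightarrow> forces W le R V v a)"

text \<open>Filtration through \<Sigma>; classes are represented as sets of worlds.\<close>
definition filt_class :: "'w set \<Rightarrow> ('w \<Rightarrow> 'w \<Rightarrow> bool) \<Rightarrow> ('w \<Rightarrow> 'w \<Rightarrow> bool) \<Rightarrow> (nat \<Rightarrow> 'w set)
    \<Rightarrow> fm set \<Rightarrow> 'w \<Rightarrow> 'w set" where
  "filt_class W le R V \<Sigma> w =
     {v \<in> W. \<forall>\<alpha>\<in>\<Sigma>. forces W le R V w \<alpha> \<longleftrightarrow> forces W le R V v \<alpha>}"

definition filt_W :: "'w set \<Rightarrow> ('w \<Rightarrow> 'w \<Rightarrow> bool) \<Rightarrow> ('w \<Rightarrow> 'w \<Rightarrow> bool) \<Rightarrow> (nat \<Rightarrow> 'w set)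
    \<Rightarrow> fm set \<Rightarrow> 'w set set" where
  "filt_W W le R V \<Sigma> = filt_class W le R V \<Sigma> ` W"

definition filt_le :: "'w set \<Rightarrow> ('w \<Rightarrow> 'w \<Rightarrow> bool) \<Rightarrow> ('w \<Rightarrow> 'w \<Rightarrow> bool) \<Rightarrow> (nat \<Rightarrow> 'w set)
    \<Rightarrow> fm set \<Rightarrow> 'w set \<Rightarrow> 'w set \<Rightarrow> bool" where
  "filt_le W le R V \<Sigma> X Y \<longleftrightarrow>
     X \<in> filt_W W le R V \<Sigma> \<and> Y \<in> filt_W W le R V \<Sigma> \<and>
     (\<exists>w v. X = filt_class W le R V \<Sigma> w \<and> Y = filt_class W le R V \<Sigma> v \<and> w \<in> W \<and> v \<in> W \<and>
        (\<forall>\<alpha>\<in>\<Sigma>. forces W le R V w \<alpha> \<longrightarrow> forces W le R V v \<alpha>))"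

definition filt_R :: "'w set \<Rightarrow> ('w \<Rightarrow> 'w \<Rightarrow> bool) \<Rightarrow> ('w \<Rightarrow> 'w \<Rightarrow> bool) \<Rightarrow> (nat \<Rightarrow> 'w set)
    \<Rightarrow> fm set \<Rightarrow> 'w set \<Rightarrow> 'w set \<Rightarrow> bool" where
  "filt_R W le R V \<Sigma> X Y \<longleftrightarrow>
     X \<in> filt_W W le R V \<Sigma> \<and> Y \<in> filt_W W le R V \<Sigma> \<and>
     (\<exists>w v. X = filt_class W le R V \<Sigma> w \<and> Y = filt_class W le R V \<Sigma> v \<and> w \<in> W \<and> v \<in> W \<and>
        (\<forall>\<beta>. Delta \<beta> \<in> \<Sigma> \<longrightarrow> forces W le R V w (Delta \<beta>) \<longrightarrow> forces W le R V v \<beta>))"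

definition filt_V :: "'w set \<Rightarrow> ('w \<Rightarrow> 'w \<Rightarrow> bool) \<Rightarrow> ('w \<Rightarrow> 'w \<Rightarrow> bool) \<Rightarrow> (nat \<Rightarrow> 'w set)
    \<Rightarrow> fm set \<Rightarrow> nat \<Rightarrow> 'w set set" where
  "filt_V W le R V \<Sigma> q =
     (if Var q \<in> \<Sigma> then filt_class W le R V \<Sigma> ` (V q) else {})"

end

theory Submission
  imports Defs
begin

text \<open>
  Truth of every formula in \<Sigma> at w depends only on the class [w], so it suffices to show
  that the filtered relations quantify over exactly the right classes. For \<open>\<rightarrow>\<close>: [w] \<le> [v]
  holds whenever w \<le> v (by persistence), and conversely any v with [w] \<le> [v] inherits
  the truth of \<open>\<alpha> \<rightarrow> \<beta> \<in> \<Sigma>\<close> from w, which then applies at v itself by reflexivity. For \<open>\<Delta>\<close>: [w] R [v] whenever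
  w R v, and conversely R is defined precisely so that \<open>\<Delta>\<alpha>\<close> at w transports \<open>\<alpha>\<close> to v.
\<close>

definition subformula_closed :: "fm set \<Rightarrow> bool" where
  "subformula_closed \<Sigma> \<longleftrightarrow> (\<forall>\<alpha>\<in>\<Sigma>. subformulas \<alpha> \<subseteq> \<Sigma>)"

lemma subformulas_refl: "\<alpha> \<in> subformulas \<alpha>"
  by (cases \<alpha>) auto

lemma subformulas_trans: "\<alpha> \<in> subformulas \<gamma> \<Longrightarrow> subformulas \<alpha> \<subseteq> subformulas \<gamma>"
  by (induction \<gamma>) auto

lemma subformula_closed_subformulas: "subformula_closed (subformulas \<gamma>)"
  using subformulas_trans unfolding subformula_closed_def by blast

lemma brIML1_model_le_in_W:
  "brIML1_model W le R V \<Longrightarrow> le w v \<Longrightarrow> w \<in> W \<and> v \<in> W"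
  unfolding brIML1_model_def by blast

lemma brIML1_model_le_refl:
  "brIML1_model W le R V \<Longrightarrow> w \<in> W \<Longrightarrow> le w w"
  unfolding brIML1_model_def by blast

lemma brIML1_model_le_trans:
  "brIML1_model W le R V \<Longrightarrow> le w v \<Longrightarrow> le v u \<Longrightarrow> le w u"
  using brIML1_model_le_in_W unfolding brIML1_model_def by meson

lemma brIML1_model_le_R_trans:
  "brIML1_model W le R V \<Longrightarrow> le w v \<Longrightarrow> R v u \<Longrightarrow> R w u"
  using brIML1_model_le_in_W unfolding brIML1_model_def by meson

lemma brIML1_model_V_upward:
  "brIML1_model W le R V \<Longrightarrow> w \<in> V q \<Longrightarrow> le w v \<Longrightarrow> v \<in> V q"
  using brIML1_model_le_in_W unfolding brIML1_model_def by meson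

lemma brIML1_model_V_in_W:
  "brIML1_model W le R V \<Longrightarrow> V q \<subseteq> W"
  unfolding brIML1_model_def by blast

lemma forces_mono:
  assumes model: "brIML1_model W le R V"
  shows "le w v \<Longrightarrow> forces W le R V w \<alpha> \<Longrightarrow> forces W le R V v \<alpha>"
proof (induction \<alpha> arbitrary: w v)
  case (Var q)
  then show ?case using brIML1_model_V_upward[OF model] by simp
next
  case (Imp \<alpha> \<beta>)
  have "le w u" if "le v u" for u
    using Imp.prems(1) that by (rule brIML1_model_le_trans[OF model])
  then show ?case using Imp.prems(2) by simp
next
  case (Delta \<alpha>)
  have "R w u" if "R v u" for u
    using Delta.prems(1) that by (rule brIML1_model_le_R_trans[OF model])
  then show ?case using Delta.prems(2) by simp
qed auto

locale filtration =
  fixes W :: "'w set" and le R :: "'w \<Rightarrow> 'w \<Rightarrow> bool" and V :: "nat \<Rightarrow> 'w set"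
    and \<Sigma> :: "fm set"
  assumes model: "brIML1_model W le R V"
    and closed: "subformula_closed \<Sigma>"
begin

abbreviation forcesM :: "'w \<Rightarrow> fm \<Rightarrow> bool" where
  "forcesM \<equiv> forces W le R V"

abbreviation cls :: "'w \<Rightarrow> 'w set" where
  "cls \<equiv> filt_class W le R V \<Sigma>"

abbreviation forcesF :: "'w set \<Rightarrow> fm \<Rightarrow> bool" where
  "forcesF \<equiv> forces (filt_W W le R V \<Sigma>) (filt_le W le R V \<Sigma>) (filt_R W le R V \<Sigma>) (filt_V W le R V \<Sigma>)"

lemma closed_subformula: "\<alpha> \<in> \<Sigma> \<Longrightarrow> \<beta> \<in> subformulas \<alpha> \<Longrightarrow> \<beta> \<in> \<Sigma>"
  using closed unfolding subformula_closed_def by blast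

lemma cls_forces_iff:
  assumes "w \<in> W" "w' \<in> W" "cls w = cls w'" "\<alpha> \<in> \<Sigma>"
  shows "forcesM w \<alpha> \<longleftrightarrow> forcesM w' \<alpha>"
proof -
  have "w' \<in> cls w" using assms(2,3) unfolding filt_class_def by auto
  then show ?thesis using assms(4) unfolding filt_class_def by auto
qed

lemma filt_le_cls_iff:
  assumes "w \<in> W"
  shows "filt_le W le R V \<Sigma> (cls w) Y \<longleftrightarrow>
           (\<exists>v\<in>W. Y = cls v \<and> (\<forall>\<alpha>\<in>\<Sigma>. forcesM w \<alpha> \<longrightarrow> forcesM v \<alpha>))"
proof
  assume "filt_le W le R V \<Sigma> (cls w) Y"
  then obtain w' v where "cls w = cls w'" "Y = cls v" "w' \<in> W" "v \<in> W"
    "\<forall>\<alpha>\<in>\<Sigma>. forcesM w' \<alpha> \<longrightarrow> forcesM v \<alpha>"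
    unfolding filt_le_def by blast
  then show "\<exists>v\<in>W. Y = cls v \<and> (\<forall>\<alpha>\<in>\<Sigma>. forcesM w \<alpha> \<longrightarrow> forcesM v \<alpha>)"
    using assms cls_forces_iff by metis
next
  assume "\<exists>v\<in>W. Y = cls v \<and> (\<forall>\<alpha>\<in>\<Sigma>. forcesM w \<alpha> \<longrightarrow> forcesM v \<alpha>)"
  then obtain v where "v \<in> W" "Y = cls v" "\<forall>\<alpha>\<in>\<Sigma>. forcesM w \<alpha> \<longrightarrow> forcesM v \<alpha>"
    by blast
  then show "filt_le W le R V \<Sigma> (cls w) Y"
    unfolding filt_le_def filt_W_def using assms by (intro conjI exI) auto
qed

lemma filt_R_cls_iff:
  assumes "w \<in> W"
  shows "filt_R W le R V \<Sigma> (cls w) Y \<longleftrightarrow>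
           (\<exists>v\<in>W. Y = cls v \<and> (\<forall>\<beta>. Delta \<beta> \<in> \<Sigma> \<longrightarrow> forcesM w (Delta \<beta>) \<longrightarrow> forcesM v \<beta>))"
proof
  assume "filt_R W le R V \<Sigma> (cls w) Y"
  then obtain w' v where "cls w = cls w'" "Y = cls v" "w' \<in> W" "v \<in> W"
    "\<forall>\<beta>. Delta \<beta> \<in> \<Sigma> \<longrightarrow> forcesM w' (Delta \<beta>) \<longrightarrow> forcesM v \<beta>"
    unfolding filt_R_def by blast
  then show "\<exists>v\<in>W. Y = cls v \<and> (\<forall>\<beta>. Delta \<beta> \<in> \<Sigma> \<longrightarrow> forcesM w (Delta \<beta>) \<longrightarrow> forcesM v \<beta>)"
    using assms cls_forces_iff by metis
next
  assume "\<exists>v\<in>W. Y = cls v \<and> (\<forall>\<beta>. Delta \<beta> \<in> \<Sigma> \<longrightarrow> forcesM w (Delta \<beta>) \<longrightarrow> forcesM v \<beta>)"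
  then obtain v where "v \<in> W" "Y = cls v"
    "\<forall>\<beta>. Delta \<beta> \<in> \<Sigma> \<longrightarrow> forcesM w (Delta \<beta>) \<longrightarrow> forcesM v \<beta>"
    by blast
  then show "filt_R W le R V \<Sigma> (cls w) Y"
    unfolding filt_R_def filt_W_def using assms by (intro conjI exI) auto
qed

lemma cls_in_filt_V_iff:
  assumes "w \<in> W" "Var q \<in> \<Sigma>"
  shows "cls w \<in> filt_V W le R V \<Sigma> q \<longleftrightarrow> w \<in> V q"
proof -
  have "cls w \<in> cls ` V q \<longleftrightarrow> w \<in> V q"
  proof
    assume "cls w \<in> cls ` V q"
    then obtain u where u: "u \<in> V q" "cls w = cls u" by blast
    moreover have "u \<in> W" using u(1) brIML1_model_V_in_W[OF model] by blast
    ultimately show "w \<in> V q"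
      using cls_forces_iff[OF assms(1) _ _ assms(2)] by fastforce
  qed simp
  then show ?thesis using assms(2) unfolding filt_V_def by simp
qed

lemma forces_Imp_iff_Sigma_le:
  assumes "w \<in> W" "Imp \<alpha> \<beta> \<in> \<Sigma>"
  shows "forcesM w (Imp \<alpha> \<beta>) \<longleftrightarrow>
           (\<forall>v\<in>W. (\<forall>\<phi>\<in>\<Sigma>. forcesM w \<phi> \<longrightarrow> forcesM v \<phi>) \<longrightarrow> \<not> forcesM v \<alpha> \<or> forcesM v \<beta>)"
proof
  assume "forcesM w (Imp \<alpha> \<beta>)"
  moreover have "\<forall>v\<in>W. le v v" using brIML1_model_le_refl[OF model] by blast
  ultimately show "\<forall>v\<in>W. (\<forall>\<phi>\<in>\<Sigma>. forcesM w \<phi> \<longrightarrow> forcesM v \<phi>) \<longrightarrow> \<not> forcesM v \<alpha> \<or> forcesM v \<beta>"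
    using assms(2) by auto
next
  assume "\<forall>v\<in>W. (\<forall>\<phi>\<in>\<Sigma>. forcesM w \<phi> \<longrightarrow> forcesM v \<phi>) \<longrightarrow> \<not> forcesM v \<alpha> \<or> forcesM v \<beta>"
  then show "forcesM w (Imp \<alpha> \<beta>)" using forces_mono[OF model] by auto
qed

lemma forces_Delta_iff_Sigma_R:
  assumes "w \<in> W" "Delta \<alpha> \<in> \<Sigma>"
  shows "forcesM w (Delta \<alpha>) \<longleftrightarrow>
           (\<forall>v\<in>W. (\<forall>\<beta>. Delta \<beta> \<in> \<Sigma> \<longrightarrow> forcesM w (Delta \<beta>) \<longrightarrow> forcesM v \<beta>) \<longrightarrow> forcesM v \<alpha>)"
  using assms by auto

lemma filt_forces_Imp_iff:
  assumes "w \<in> W"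
  shows "forcesF (cls w) (Imp \<alpha> \<beta>) \<longleftrightarrow>
           (\<forall>v\<in>W. (\<forall>\<phi>\<in>\<Sigma>. forcesM w \<phi> \<longrightarrow> forcesM v \<phi>) \<longrightarrow>
              \<not> forcesF (cls v) \<alpha> \<or> forcesF (cls v) \<beta>)"
  using assms by (auto simp: filt_W_def filt_le_cls_iff)

lemma filt_forces_Delta_iff:
  assumes "w \<in> W"
  shows "forcesF (cls w) (Delta \<alpha>) \<longleftrightarrow>
           (\<forall>v\<in>W. (\<forall>\<beta>. Delta \<beta> \<in> \<Sigma> \<longrightarrow> forcesM w (Delta \<beta>) \<longrightarrow> forcesM v \<beta>) \<longrightarrow>
              forcesF (cls v) \<alpha>)"
  using assms by (auto simp: filt_W_def filt_R_cls_iff)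

lemma filtration_forces_iff:
  "w \<in> W \<Longrightarrow> \<alpha> \<in> \<Sigma> \<Longrightarrow> forcesM w \<alpha> \<longleftrightarrow> forcesF (cls w) \<alpha>"
proof (induction \<alpha> arbitrary: w)
  case (Var q)
  then show ?case using cls_in_filt_V_iff by simp
next
  case (And \<alpha> \<beta>)
  then show ?case using closed_subformula[OF And.prems(2)] subformulas_refl by auto
next
  case (Or \<alpha> \<beta>)
  then show ?case using closed_subformula[OF Or.prems(2)] subformulas_refl by auto
next
  case (Imp \<alpha> \<beta>)
  have "\<alpha> \<in> \<Sigma>" "\<beta> \<in> \<Sigma>" using closed_subformula[OF Imp.prems(2)] subformulas_refl by auto
  let ?incl = "\<lambda>v. \<forall>\<phi>\<in>\<Sigma>. forcesM w \<phi> \<longrightarrow> forcesM v \<phi>"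
  have "forcesM w (Imp \<alpha> \<beta>) \<longleftrightarrow> (\<forall>v\<in>W. ?incl v \<longrightarrow> \<not> forcesM v \<alpha> \<or> forcesM v \<beta>)"
    by (rule forces_Imp_iff_Sigma_le[OF Imp.prems])
  also have "\<dots> \<longleftrightarrow> (\<forall>v\<in>W. ?incl v \<longrightarrow> \<not> forcesF (cls v) \<alpha> \<or> forcesF (cls v) \<beta>)"
    using Imp.IH \<open>\<alpha> \<in> \<Sigma>\<close> \<open>\<beta> \<in> \<Sigma>\<close> by auto
  also have "\<dots> \<longleftrightarrow> forcesF (cls w) (Imp \<alpha> \<beta>)"
    by (rule filt_forces_Imp_iff[OF Imp.prems(1), symmetric])
  finally show ?case .
next
  case (Delta \<alpha>)
  have "\<alpha> \<in> \<Sigma>" using closed_subformula[OF Delta.prems(2)] subformulas_refl by auto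
  let ?transp = "\<lambda>v. \<forall>\<beta>. Delta \<beta> \<in> \<Sigma> \<longrightarrow> forcesM w (Delta \<beta>) \<longrightarrow> forcesM v \<beta>"
  have "forcesM w (Delta \<alpha>) \<longleftrightarrow> (\<forall>v\<in>W. ?transp v \<longrightarrow> forcesM v \<alpha>)"
    by (rule forces_Delta_iff_Sigma_R[OF Delta.prems])
  also have "\<dots> \<longleftrightarrow> (\<forall>v\<in>W. ?transp v \<longrightarrow> forcesF (cls v) \<alpha>)"
    using Delta.IH \<open>\<alpha> \<in> \<Sigma>\<close> by auto
  also have "\<dots> \<longleftrightarrow> forcesF (cls w) (Delta \<alpha>)"
    by (rule filt_forces_Delta_iff[OF Delta.prems(1), symmetric])
  finally show ?case .
qed simp

end

theorem theorem5p4: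
  fixes W :: "'w set" and le R :: "'w \<Rightarrow> 'w \<Rightarrow> bool" and V :: "nat \<Rightarrow> 'w set"
    and \<gamma> :: fm
  assumes "brIML1_model W le R V"
    and "\<exists>w\<in>W. \<not> forces W le R V w \<gamma>"
  shows "\<forall>w\<in>W. \<forall>\<alpha>\<in>subformulas \<gamma>.
           forces W le R V w \<alpha> \<longleftrightarrow>
           forces (filt_W W le R V (subformulas \<gamma>)) (filt_le W le R V (subformulas \<gamma>))
                  (filt_R W le R V (subformulas \<gamma>)) (filt_V W le R V (subformulas \<gamma>))
                  (filt_class W le R V (subformulas \<gamma>) w) \<alpha>"
proof -
  interpret filtration W le R V "subformulas \<gamma>"
    using assms(1) subformula_closed_subformulas by unfold_locales
  show ?thesis using filtration_forces_iff by blast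
qed

end
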